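(* Let $0\le\mu\le m$, $\epsilon=2^\mu$, let $\mathbf{r}'=(r'_0,\dots,r'_{2^m-1})\in GF(2^m)^{2^m}$ and let $$\mathbf{S}_1(x)=\sum_{j=0}^{2^m-1} r'_j\frac{s_\mu(x)-s_\mu(\omega_j)}{x-\omega_j}.$$ For $0\le l<2^{m-\mu}$ let $\mathbf{r}'_{l,\epsilon}=(r'_{l\epsilon},r'_{l\epsilon+1},\dots,r'_{l\epsilon+\epsilon-1})$. Then $\mathbf{S}_1(x)=\sum_{j=0}^{\epsilon-1}\sigma_j\bar X_j(x)$, where $$(\sigma_0,\dots,\sigma_{\epsilon-1})=\frac{1}{p_{2^m-2^\mu}}\sum_{l=0}^{2^{m-\mu}-1}\mathrm{IFFT}_{\bar{\mathbb X}}\big(\mathbf{r}'_{l,\epsilon},\mu,\omega_{\epsilon l}\big).$$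
   Context: Fix a basis $\{v_0,\dots,v_{m-1}\}$ of $GF(2^m)$ over $GF(2)$. For $0\le j<2^m$ with binary expansion $j=\sum_{i=0}^{m-1} j_i2^i$, set $\omega_j=\sum_{i=0}^{m-1} j_i v_i$. For $0\le\tau\le m$, $s_\tau(x)=\prod_{j=0}^{2^\tau-1}(x-\omega_j)$. Define $X_j(x)=\prod_{i=0}^{m-1}s_i(x)^{j_i}$, $p_j=\prod_{i=0}^{m-1}s_i(v_i)^{j_i}$ and $\bar X_j(x)=X_j(x)/p_j$; $\bar{\mathbb X}=\{\bar X_0,\dots,\bar X_{2^m-1}\}$ is a basis of polynomials of degree $<2^m$. For $0\le\tau\le m$, $\beta\in GF(2^m)$ and $\mathbf{F}=(F_0,\dots,F_{2^\tau-1})\in GF(2^m)^{2^\tau}$, $\mathrm{IFFT}_{\bar{\mathbb X}}(\mathbf{F},\tau,\beta)$ denotes the coefficient vector $(\bar g_0,\dots,\bar g_{2^\tau-1})$ of the unique polynomial $g(x)=\sum_{j=0}^{2^\tau-1}\bar g_j\bar X_j(x)$ of degree $<2^\tau$ satisfying $g(\omega_j+\beta)=F_j$ for $0\le j<2^\tau$. Fractions $\frac{s_\mu(x)-s_\mu(a)}{x-a}$ denote exact polynomial quotients. *)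

theory Defs
  imports "HOL-Computational_Algebra.Polynomial"
begin

definition bitdig :: "nat \<Rightarrow> nat \<Rightarrow> nat" where
  "bitdig j i = (j div 2 ^ i) mod 2"

definition omega :: "nat \<Rightarrow> (nat \<Rightarrow> 'a::field) \<Rightarrow> nat \<Rightarrow> 'a" where
  "omega m v j = (\<Sum>i<m. of_nat (bitdig j i) * v i)"

text \<open>v_0..v_{m-1} is a basis of the field over GF(2): every element is a unique
  GF(2)-linear combination, i.e. j |-> omega_j is a bijection {0..<2^m} -> field.\<close>
definition is_F2_basis :: "nat \<Rightarrow> (nat \<Rightarrow> 'a::field) \<Rightarrow> bool" where
  "is_F2_basis m v = bij_betw (omega m v) {..<2 ^ m} UNIV"

definition s_poly :: "nat \<Rightarrow> (nat \<Rightarrow> 'a::field) \<Rightarrow> nat \<Rightarrow> 'a poly" where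
  "s_poly m v \<tau> = (\<Prod>j<2 ^ \<tau>. [:- omega m v j, 1:])"

definition X_poly :: "nat \<Rightarrow> (nat \<Rightarrow> 'a::field) \<Rightarrow> nat \<Rightarrow> 'a poly" where
  "X_poly m v j = (\<Prod>i<m. s_poly m v i ^ bitdig j i)"

definition p_const :: "nat \<Rightarrow> (nat \<Rightarrow> 'a::field) \<Rightarrow> nat \<Rightarrow> 'a" where
  "p_const m v j = (\<Prod>i<m. poly (s_poly m v i) (v i) ^ bitdig j i)"

definition Xbar :: "nat \<Rightarrow> (nat \<Rightarrow> 'a::field) \<Rightarrow> nat \<Rightarrow> 'a poly" where
  "Xbar m v j = smult (inverse (p_const m v j)) (X_poly m v j)"

definition IFFT :: "nat \<Rightarrow> (nat \<Rightarrow> 'a::field) \<Rightarrow> (nat \<Rightarrow> 'a) \<Rightarrow> nat \<Rightarrow> 'a \<Rightarrow> nat \<Rightarrow> 'a" where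
  "IFFT m v F \<tau> \<beta> = (THE g. (\<forall>j\<ge>2 ^ \<tau>. g j = 0) \<and>
      (\<forall>j<2 ^ \<tau>. poly (\<Sum>i<2 ^ \<tau>. smult (g i) (Xbar m v i)) (omega m v j + \<beta>) = F j))"

end

theory Submission
  imports Defs "HOL-Computational_Algebra.Primes"
begin

(* Since the field has 2^m elements it has characteristic 2, and s_mu, being the product of
  x - w over the GF(2)-span W of v_0..v_(mu-1), is additive.  Hence
  s_mu(x) - s_mu(a) = s_mu(x - a) = prod_(w in W) (x - a - w), so the quotient by x - a is
  Q_a = prod_(0 < k < 2^mu) (x - a - w_k).  On a coset beta + W the polynomial Q_(beta + w_i)
  vanishes everywhere except at beta + w_i, where it equals c = prod_(0 < k < 2^mu) w_k.
  Grouping the indices j = 2^mu l + i, the l-th block of S_1 is therefore c times the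
  polynomial of degree < 2^mu interpolating r'_(l,eps) on w_(eps l) + W, i.e. c times its
  IFFT expansion in the Xbar basis.  Finally c p_(2^m - 2^mu) = prod_(t < m) s_t(v_t) is the
  product of all nonzero field elements, which is 1 in characteristic 2. *)

lemma bitdig_0 [simp]: "bitdig 0 i = 0"
  by (simp add: bitdig_def)

lemma bitdig_eq_0_if_less_power:
  assumes "j < 2 ^ \<mu>" "\<mu> \<le> i"
  shows "bitdig j i = 0"
proof -
  have "j < 2 ^ i"
    using assms by (meson order.strict_trans2 one_le_numeral power_increasing)
  then show ?thesis
    by (simp add: bitdig_def)
qed

lemma bitdig_mult_power_add:
  assumes "j < 2 ^ \<mu>"
  shows "bitdig (2 ^ \<mu> * l + j) i = (if i < \<mu> then bitdig j i else bitdig l (i - \<mu>))"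
proof (cases "i < \<mu>")
  case True
  then have "(2::nat) ^ \<mu> = 2 ^ Suc i * 2 ^ (\<mu> - Suc i)"
    by (metis Suc_leI le_add_diff_inverse power_add)
  then have "(2 ^ \<mu> * l + j) div 2 ^ i = 2 * (2 ^ (\<mu> - Suc i) * l) + j div 2 ^ i"
    using div_mult_self1[of "2 ^ i" j "2 * (2 ^ (\<mu> - Suc i) * l)"] by (simp add: ac_simps)
  with True show ?thesis by (simp add: bitdig_def)
next
  case False
  then have "(2::nat) ^ i = 2 ^ \<mu> * 2 ^ (i - \<mu>)"
    by (metis le_add_diff_inverse not_less power_add)
  then have "(2 ^ \<mu> * l + j) div 2 ^ i = ((2 ^ \<mu> * l + j) div 2 ^ \<mu>) div 2 ^ (i - \<mu>)"
    by (metis div_mult2_eq)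
  with False assms show ?thesis by (simp add: bitdig_def)
qed

lemma omega_mult_power_add:
  assumes "j < 2 ^ \<mu>"
  shows "omega m v (2 ^ \<mu> * l + j) = omega m v (2 ^ \<mu> * l) + omega m v j"
proof -
  have "bitdig (2 ^ \<mu> * l + j) i = bitdig (2 ^ \<mu> * l) i + bitdig j i" for i
    using bitdig_mult_power_add[OF assms] bitdig_mult_power_add[of 0 \<mu> l] bitdig_eq_0_if_less_power[OF assms]
    by simp
  then show ?thesis by (simp add: omega_def distrib_right sum.distrib)
qed

lemma omega_0 [simp]: "omega m v 0 = 0"
  by (simp add: omega_def)

lemma omega_power:
  assumes "i < m"
  shows "omega m v (2 ^ i) = v i"
proof -
  have "bitdig 1 k = (if k = 0 then 1 else 0)" for k
    using bitdig_eq_0_if_less_power[of 1 1 k] by (simp add: bitdig_def)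
  then have power: "bitdig (2 ^ i) k = (if k = i then 1 else 0)" for k
    using bitdig_mult_power_add[of 0 i 1 k] by simp
  have "(\<Sum>k<m. of_nat (bitdig (2 ^ i) k) * v k) = (\<Sum>k<m. if k = i then v k else 0)"
    by (rule sum.cong) (simp_all add: power)
  with assms show ?thesis
    by (simp add: omega_def)
qed

lemma sum_bitdig_power: "(\<Sum>i<m. bitdig j i * 2 ^ i) = j mod 2 ^ m"
proof (induction m)
  case (Suc m)
  have "j mod 2 ^ Suc m = 2 ^ m * (j div 2 ^ m mod 2) + j mod 2 ^ m"
    by (metis mod_mult2_eq power_Suc2)
  with Suc show ?case by (simp add: bitdig_def)
qed simp

lemma bitdig_power_diff_power:
  assumes "\<mu> \<le> m" "i < m"
  shows "bitdig (2 ^ m - 2 ^ \<mu>) i = (if \<mu> \<le> i then 1 else 0)"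
proof -
  have "bitdig (2 ^ n - 1) k = 1" if "k < n" for n k
  proof -
    have "(2::nat) ^ n - 1 = 2 ^ k * (2 ^ (n - k) - 1) + (2 ^ k - 1)"
      using that by (simp add: diff_mult_distrib2 flip: power_add)
    then have shift: "bitdig (2 ^ n - 1) k = bitdig (2 ^ (n - k) - 1) 0"
      by (simp only:) (subst bitdig_mult_power_add; simp)
    have "odd ((2::nat) ^ (n - k) - 1)"
      using that by simp
    then have "((2::nat) ^ (n - k) - 1) mod 2 = 1"
      by (metis odd_iff_mod_2_eq_one)
    with shift show ?thesis
      by (simp add: bitdig_def)
  qed
  moreover have "(2::nat) ^ m - 2 ^ \<mu> = 2 ^ \<mu> * (2 ^ (m - \<mu>) - 1) + 0"
    using assms(1) by (simp add: diff_mult_distrib2 flip: power_add)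
  ultimately show ?thesis
    using assms bitdig_mult_power_add[of 0 \<mu> "2 ^ (m - \<mu>) - 1" i] by auto
qed

lemma omega_power_add: "i < m \<Longrightarrow> j < 2 ^ i \<Longrightarrow> omega m v (2 ^ i + j) = v i + omega m v j"
  using omega_mult_power_add[where l = 1 and m = m and v = v] by (simp add: omega_power)

lemma prod_atLeastLessThan_two_power_Suc:
  fixes f :: "nat \<Rightarrow> 'b::comm_monoid_mult"
  assumes "a \<le> 2 ^ i"
  shows "(\<Prod>j\<in>{a..<2 ^ Suc i}. f j) = (\<Prod>j\<in>{a..<2 ^ i}. f j) * (\<Prod>j<2 ^ i. f (2 ^ i + j))"
proof -
  have "(\<Prod>j\<in>{2 ^ i..<2 ^ Suc i}. f j) = (\<Prod>j<2 ^ i. f (2 ^ i + j))"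
    using prod.shift_bounds_nat_ivl[of f 0 "2 ^ i" "2 ^ i"] by (simp add: atLeast0LessThan add.commute mult_2)
  with assms prod.atLeastLessThan_concat[of a "2 ^ i" "2 ^ Suc i" f] show ?thesis
    by simp
qed

lemma sum_lessThan_mult_nested:
  fixes f :: "nat \<Rightarrow> 'b::comm_monoid_add"
  shows "(\<Sum>j<n * k. f j) = (\<Sum>l<n. \<Sum>i<k. f (k * l + i))"
proof -
  have "(\<Sum>j\<in>{l * k..<l * k + k}. f j) = (\<Sum>i<k. f (k * l + i))" for l
    using sum.shift_bounds_nat_ivl[where g = f and m = 0 and n = k and k = "l * k"]
    by (simp add: atLeast0LessThan ac_simps)
  then show ?thesis
    by (simp flip: sum.nat_group)
qed

lemma smult_sum_right: "smult c (\<Sum>i\<in>A. f i) = (\<Sum>i\<in>A. smult c (f i))"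
  by (induction A rule: infinite_finite_induct) (simp_all add: smult_add_right)

lemma of_nat_card_UNIV_eq_0: "of_nat (card (UNIV :: 'a::{ring_1,finite} set)) = (0::'a)"
proof -
  have "(\<Sum>x\<in>UNIV. x + 1) = (\<Sum>x\<in>UNIV. x::'a)"
    by (rule sum.reindex_bij_witness[of _ "\<lambda>x. x - 1" "\<lambda>x. x + 1"]) auto
  then show ?thesis
    by (simp add: sum.distrib)
qed

lemma CHAR_eq_2_if_card_eq_2_power:
  assumes "card (UNIV :: 'a::{field,finite} set) = 2 ^ m"
  shows "CHAR('a) = 2"
proof -
  have "prime CHAR('a)"
    by (intro prime_CHAR_semidom finite_imp_CHAR_pos) simp
  moreover have "CHAR('a) dvd 2 ^ m"
    by (metis assms of_nat_card_UNIV_eq_0 of_nat_eq_0_iff_char_dvd)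
  ultimately have "CHAR('a) dvd 2"
    using prime_dvd_power by blast
  with \<open>prime CHAR('a)\<close> show ?thesis
    using primes_dvd_imp_eq two_is_prime_nat by blast
qed

lemma prod_nonzero_eq_1_if_CHAR_2:
  assumes "CHAR('a::{field,finite}) = 2"
  shows "(\<Prod>x\<in>UNIV - {0}. x) = (1::'a)"
proof -
  define P :: 'a where "P = (\<Prod>x\<in>UNIV - {0}. x)"
  have "P = (\<Prod>x\<in>UNIV - {0}. inverse x)"
    unfolding P_def by (rule prod.reindex_bij_witness[of _ inverse inverse]) auto
  also have "\<dots> = inverse P"
    unfolding P_def using prod_inversef[of "\<lambda>x. x" "-{0::'a}"] by (simp add: comp_def Compl_eq_Diff_UNIV)
  moreover have "P \<noteq> 0"
    unfolding P_def by simp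
  ultimately have "P * P = 1"
    by (metis right_inverse)
  have two: "(2::'a) = 0"
    using of_nat_CHAR[where ?'a = 'a] assms by simp
  have "(P + 1) * (P + 1) = P * P + 2 * P + 1"
    by (simp add: algebra_simps)
  also have "\<dots> = 0"
    using \<open>P * P = 1\<close> two by simp
  finally have "(P + 1) * (P + 1) = 0" .
  then show ?thesis
    unfolding P_def using uminus_CHAR_2[OF assms] by (simp add: add_eq_0_iff)
qed

lemma poly_s_poly: "poly (s_poly m v i) x = (\<Prod>j<2 ^ i. x - omega m v j)"
  by (simp add: s_poly_def poly_prod)

lemma degree_s_poly: "degree (s_poly m v i) = 2 ^ i"
  by (simp add: s_poly_def degree_prod_eq_sum_degree)

lemma lead_coeff_s_poly: "lead_coeff (s_poly m v i) = 1"
  by (simp add: s_poly_def lead_coeff_prod)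

lemma s_poly_nonzero: "s_poly m v i \<noteq> 0"
  using lead_coeff_s_poly[of m v i] by auto

lemma poly_s_poly_omega: "k < 2 ^ i \<Longrightarrow> poly (s_poly m v i) (omega m v k) = 0"
  by (auto simp: poly_s_poly)

lemma degree_X_poly: "j < 2 ^ m \<Longrightarrow> degree (X_poly m v j) = j"
  by (simp add: X_poly_def degree_prod_eq_sum_degree degree_power_eq s_poly_nonzero degree_s_poly
      sum_bitdig_power mult.commute)

lemma p_const_power_diff:
  assumes "\<mu> \<le> m"
  shows "p_const m v (2 ^ m - 2 ^ \<mu>) = (\<Prod>t\<in>{\<mu>..<m}. poly (s_poly m v t) (v t))"
proof -
  have "p_const m v (2 ^ m - 2 ^ \<mu>) = (\<Prod>t<m. if \<mu> \<le> t then poly (s_poly m v t) (v t) else 1)"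
    unfolding p_const_def by (rule prod.cong) (simp_all add: bitdig_power_diff_power[OF assms])
  also have "\<dots> = (\<Prod>t\<in>{\<mu>..<m}. poly (s_poly m v t) (v t))"
    by (simp add: prod.If_cases Int_def atLeastLessThan_def conj_commute)
  finally show ?thesis .
qed

definition s_quotient :: "nat \<Rightarrow> (nat \<Rightarrow> 'a::field) \<Rightarrow> nat \<Rightarrow> 'a \<Rightarrow> 'a poly" where
  "s_quotient m v \<mu> a = (\<Prod>k\<in>{1..<2 ^ \<mu>}. [:- (a + omega m v k), 1:])"

lemma degree_s_quotient: "degree (s_quotient m v \<mu> a) = 2 ^ \<mu> - 1"
  by (simp add: s_quotient_def degree_prod_eq_sum_degree)

definition omega_prod :: "nat \<Rightarrow> (nat \<Rightarrow> 'a::field) \<Rightarrow> nat \<Rightarrow> 'a" where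
  "omega_prod m v \<mu> = (\<Prod>k\<in>{1..<2 ^ \<mu>}. omega m v k)"

context
  fixes m :: nat and v :: "nat \<Rightarrow> 'a::{field,finite}"
  assumes card: "card (UNIV :: 'a set) = 2 ^ m" and basis: "is_F2_basis m v"
begin

lemma CHAR_2: "CHAR('a) = 2"
  using card by (rule CHAR_eq_2_if_card_eq_2_power)

lemma two_eq_0: "(2::'a) = 0"
  using of_nat_CHAR[where ?'a = 'a] by (simp add: CHAR_2)

lemma omega_eq_iff: "j < 2 ^ m \<Longrightarrow> k < 2 ^ m \<Longrightarrow> omega m v j = omega m v k \<longleftrightarrow> j = k"
  using basis by (auto simp: is_F2_basis_def dest: bij_betw_imp_inj_on inj_onD)

lemma card_omega_translate:
  assumes "\<tau> \<le> m"
  shows "card ((\<lambda>j. omega m v j + \<beta>) ` {..<2 ^ \<tau>}) = 2 ^ \<tau>"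
proof -
  have "(2::nat) ^ \<tau> \<le> 2 ^ m"
    using assms by simp
  then have "inj_on (\<lambda>j. omega m v j + \<beta>) {..<2 ^ \<tau>}"
    by (intro inj_onI) (metis add_right_cancel lessThan_iff omega_eq_iff order.strict_trans2)
  then show ?thesis
    by (simp add: card_image)
qed

lemma poly_s_poly_Suc:
  assumes "i < m"
  shows "poly (s_poly m v (Suc i)) x = poly (s_poly m v i) x * poly (s_poly m v i) (x + v i)"
  using prod_atLeastLessThan_two_power_Suc[of 0 i "\<lambda>j. x - omega m v j"] assms
  by (simp add: poly_s_poly atLeast0LessThan omega_power_add minus_CHAR_2[OF CHAR_2] add.assoc)

lemma poly_s_poly_add:
  "i \<le> m \<Longrightarrow> poly (s_poly m v i) (x + y) = poly (s_poly m v i) x + poly (s_poly m v i) y"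
proof (induction i arbitrary: x y)
  case 0
  then show ?case by (simp add: poly_s_poly)
next
  case (Suc i)
  let ?s = "poly (s_poly m v i)"
  have s_Suc: "poly (s_poly m v (Suc i)) z = ?s z * (?s z + ?s (v i))" for z
    using Suc by (simp add: poly_s_poly_Suc)
  have "(a + b) * (a + b + c) = a * (a + c) + b * (b + c) + 2 * (a * b)" for a b c :: 'a
    by (simp add: algebra_simps)
  with Suc show ?case
    by (simp add: s_Suc two_eq_0)
qed

lemma s_poly_minus_const_eq_prod:
  assumes "\<mu> \<le> m"
  shows "s_poly m v \<mu> - [:poly (s_poly m v \<mu>) a:] = (\<Prod>k<2 ^ \<mu>. [:- (a + omega m v k), 1:])"
proof (rule poly_eqI_degree_lead_coeff[where n = "2 ^ \<mu>" and A = "(\<lambda>j. omega m v j + a) ` {..<2 ^ \<mu>}"])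
  have "coeff (s_poly m v \<mu>) (2 ^ \<mu>) = 1"
    using lead_coeff_s_poly[of m v \<mu>] by (simp add: degree_s_poly)
  moreover have "coeff (\<Prod>k<2 ^ \<mu>. [:- (a + omega m v k), 1:]) (2 ^ \<mu>) = 1"
    using lead_coeff_prod[of "\<lambda>k. [:- (a + omega m v k), 1:]" "{..<2 ^ \<mu>}"]
    by (simp add: degree_prod_eq_sum_degree)
  ultimately show "coeff (s_poly m v \<mu> - [:poly (s_poly m v \<mu>) a:]) (2 ^ \<mu>)
      = coeff (\<Prod>k<2 ^ \<mu>. [:- (a + omega m v k), 1:]) (2 ^ \<mu>)"
    by (simp add: coeff_pCons')
  show "card ((\<lambda>j. omega m v j + a) ` {..<2 ^ \<mu>}) \<ge> 2 ^ \<mu>"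
    using assms by (simp add: card_omega_translate)
  show "degree (s_poly m v \<mu> - [:poly (s_poly m v \<mu>) a:]) \<le> 2 ^ \<mu>"
    using degree_diff_le_max[of "s_poly m v \<mu>" "[:poly (s_poly m v \<mu>) a:]"] by (simp add: degree_s_poly)
  show "degree (\<Prod>k<2 ^ \<mu>. [:- (a + omega m v k), 1:]) \<le> 2 ^ \<mu>"
    by (simp add: degree_prod_eq_sum_degree)
  fix z assume "z \<in> (\<lambda>j. omega m v j + a) ` {..<2 ^ \<mu>}"
  then obtain j where j: "j < 2 ^ \<mu>" "z = omega m v j + a"
    by auto
  then show "poly (s_poly m v \<mu> - [:poly (s_poly m v \<mu>) a:]) z
      = poly (\<Prod>k<2 ^ \<mu>. [:- (a + omega m v k), 1:]) z"
    using assms by (auto simp: poly_s_poly_add poly_s_poly_omega poly_prod prod_zero_iff)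
qed

lemma s_poly_minus_const_eq:
  assumes "\<mu> \<le> m"
  shows "s_poly m v \<mu> - [:poly (s_poly m v \<mu>) a:] = [:- a, 1:] * s_quotient m v \<mu> a"
proof -
  have "{..<2 ^ \<mu>} = insert 0 {1..<(2::nat) ^ \<mu>}"
    by auto
  then show ?thesis
    using assms by (simp add: s_poly_minus_const_eq_prod s_quotient_def)
qed

lemma s_poly_minus_const_div:
  "\<mu> \<le> m \<Longrightarrow> (s_poly m v \<mu> - [:poly (s_poly m v \<mu>) a:]) div [:- a, 1:] = s_quotient m v \<mu> a"
  unfolding s_poly_minus_const_eq by (rule nonzero_mult_div_cancel_left) simp

lemma poly_s_quotient_translate:
  assumes "\<mu> \<le> m" "i < 2 ^ \<mu>" "k < 2 ^ \<mu>"
  shows "poly (s_quotient m v \<mu> (\<beta> + omega m v i)) (omega m v k + \<beta>)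
    = (if i = k then omega_prod m v \<mu> else 0)"
proof (cases "i = k")
  case True
  then show ?thesis
    by (simp add: s_quotient_def omega_prod_def poly_prod minus_CHAR_2[OF CHAR_2] two_eq_0)
next
  case False
  let ?a = "\<beta> + omega m v i" and ?x = "omega m v k + \<beta>"
  have "(2::nat) ^ \<mu> \<le> 2 ^ m"
    using assms(1) by simp
  then have "i < 2 ^ m" "k < 2 ^ m"
    using assms(2,3) by linarith+
  with False have "?x \<noteq> ?a"
    by (simp add: omega_eq_iff)
  then have nonzero: "poly [:- ?a, 1:] ?x \<noteq> 0"
    by simp
  have "poly (s_poly m v \<mu> - [:poly (s_poly m v \<mu>) ?a:]) ?x = 0"
    using assms by (simp add: poly_s_poly_add poly_s_poly_omega)
  then have "poly [:- ?a, 1:] ?x * poly (s_quotient m v \<mu> ?a) ?x = 0"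
    by (simp only: s_poly_minus_const_eq[OF assms(1)] poly_mult)
  with nonzero False show ?thesis
    by simp
qed

lemma omega_prod_Suc:
  assumes "i < m"
  shows "omega_prod m v (Suc i) = omega_prod m v i * poly (s_poly m v i) (v i)"
  using prod_atLeastLessThan_two_power_Suc[of 1 i "omega m v"] assms
  by (simp add: omega_prod_def poly_s_poly omega_power_add minus_CHAR_2[OF CHAR_2])

lemma omega_prod_eq_prod_s_poly:
  "i \<le> m \<Longrightarrow> omega_prod m v i = (\<Prod>t<i. poly (s_poly m v t) (v t))"
proof (induction i)
  case 0
  then show ?case by (simp add: omega_prod_def)
next
  case (Suc i)
  then show ?case by (simp add: omega_prod_Suc)
qed

lemma omega_prod_top: "omega_prod m v m = 1"
proof -
  have "bij_betw (omega m v) ({..<2 ^ m} - {0}) (UNIV - {0})"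
    using basis by (intro bij_betw_DiffI) (auto simp: is_F2_basis_def)
  moreover have "{..<2 ^ m} - {0} = {1..<(2::nat) ^ m}"
    by auto
  ultimately have "bij_betw (omega m v) {1..<2 ^ m} (UNIV - {0})"
    by simp
  from prod.reindex_bij_betw[OF this, of "\<lambda>x. x"]
  have "omega_prod m v m = (\<Prod>x\<in>UNIV - {0}. x)"
    by (simp add: omega_prod_def)
  also have "\<dots> = 1"
    using CHAR_2 by (rule prod_nonzero_eq_1_if_CHAR_2)
  finally show ?thesis .
qed

lemma omega_prod_mult_p_const:
  assumes "\<mu> \<le> m"
  shows "omega_prod m v \<mu> * p_const m v (2 ^ m - 2 ^ \<mu>) = 1"
proof -
  have "omega_prod m v \<mu> * p_const m v (2 ^ m - 2 ^ \<mu>) = (\<Prod>t<m. poly (s_poly m v t) (v t))"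
    using assms prod.atLeastLessThan_concat[of 0 \<mu> m "\<lambda>t. poly (s_poly m v t) (v t)"]
    by (simp add: omega_prod_eq_prod_s_poly p_const_power_diff atLeast0LessThan)
  also have "\<dots> = 1"
    using omega_prod_top by (simp add: omega_prod_eq_prod_s_poly)
  finally show ?thesis .
qed

lemma s_poly_v_nonzero:
  assumes "i < m"
  shows "poly (s_poly m v i) (v i) \<noteq> 0"
proof
  assume "poly (s_poly m v i) (v i) = 0"
  then obtain j where j: "j < 2 ^ i" "omega m v (2 ^ i) = omega m v j"
    using assms by (auto simp: poly_s_poly omega_power)
  moreover have "(2::nat) ^ i < 2 ^ m"
    using assms by simp
  ultimately show False
    by (simp add: omega_eq_iff)
qed

lemma p_const_nonzero: "p_const m v j \<noteq> 0"
  by (simp add: p_const_def s_poly_v_nonzero)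

lemma degree_Xbar: "j < 2 ^ m \<Longrightarrow> degree (Xbar m v j) = j"
  by (simp add: Xbar_def p_const_nonzero degree_X_poly)

lemma coeff_Xbar_self:
  assumes "j < 2 ^ m"
  shows "coeff (Xbar m v j) j \<noteq> 0"
proof -
  have "Xbar m v j \<noteq> 0"
    by (simp add: Xbar_def X_poly_def s_poly_nonzero p_const_nonzero)
  with assms show ?thesis
    by (metis degree_Xbar leading_coeff_0_iff)
qed

lemma degree_Xbar_sum_less:
  assumes "n \<le> 2 ^ m" "0 < n"
  shows "degree (\<Sum>i<n. smult (g i) (Xbar m v i)) < n"
  using assms by (intro degree_sum_less) (auto intro: le_less_trans degree_smult_le simp: degree_Xbar)

lemma Xbar_sum_eq_0_imp_eq_0:
  assumes "n \<le> 2 ^ m" "(\<Sum>i<n. smult (g i) (Xbar m v i)) = 0" "i < n"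
  shows "g i = 0"
  using assms
proof (induction n arbitrary: i)
  case (Suc n)
  have "coeff (\<Sum>i<n. smult (g i) (Xbar m v i)) n = 0"
    using Suc.prems(1) by (simp add: coeff_sum coeff_eq_0 degree_Xbar)
  moreover have "coeff (\<Sum>i<Suc n. smult (g i) (Xbar m v i)) n = 0"
    using Suc.prems(2) by simp
  ultimately have "g n * coeff (Xbar m v n) n = 0"
    by simp
  then have "g n = 0"
    using Suc.prems(1) coeff_Xbar_self by simp
  with Suc show ?case
    by (cases "i = n") simp_all
qed simp

lemma ex_Xbar_sum_eq:
  assumes "n \<le> 2 ^ m" "\<forall>k\<ge>n. coeff q k = 0"
  shows "\<exists>g. (\<forall>j\<ge>n. g j = 0) \<and> q = (\<Sum>i<n. smult (g i) (Xbar m v i))"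
  using assms
proof (induction n arbitrary: q)
  case 0
  then have "q = 0"
    by (intro poly_eqI) simp
  then show ?case
    by auto
next
  case (Suc n)
  define a where "a = coeff q n / coeff (Xbar m v n) n"
  have "coeff (q - smult a (Xbar m v n)) k = 0" if "n \<le> k" for k
  proof (cases "k = n")
    case True
    then show ?thesis
      using Suc.prems(1) coeff_Xbar_self[of n] by (simp add: a_def)
  next
    case False
    with that Suc.prems show ?thesis
      by (simp add: coeff_eq_0 degree_Xbar)
  qed
  moreover have "n \<le> 2 ^ m"
    using Suc.prems(1) by simp
  ultimately obtain g where g: "\<forall>j\<ge>n. g j = 0"
      "q - smult a (Xbar m v n) = (\<Sum>i<n. smult (g i) (Xbar m v i))"
    using Suc.IH by blast
  have "(\<Sum>i<n. smult ((g(n := a)) i) (Xbar m v i)) = (\<Sum>i<n. smult (g i) (Xbar m v i))"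
    by (auto intro!: sum.cong)
  with g(2) have "q = (\<Sum>i<Suc n. smult ((g(n := a)) i) (Xbar m v i))"
    by (simp add: diff_eq_eq)
  with g(1) show ?case
    by (intro exI[of _ "g(n := a)"]) auto
qed

lemma IFFT_eqI:
  assumes "\<tau> \<le> m" "\<forall>j\<ge>2 ^ \<tau>. g j = 0"
    and "\<forall>j<2 ^ \<tau>. poly (\<Sum>i<2 ^ \<tau>. smult (g i) (Xbar m v i)) (omega m v j + \<beta>) = F j"
  shows "IFFT m v F \<tau> \<beta> = g"
  unfolding IFFT_def
proof (rule the_equality)
  show "(\<forall>j\<ge>2 ^ \<tau>. g j = 0) \<and>
      (\<forall>j<2 ^ \<tau>. poly (\<Sum>i<2 ^ \<tau>. smult (g i) (Xbar m v i)) (omega m v j + \<beta>) = F j)"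
    using assms by simp
  fix h assume h: "(\<forall>j\<ge>2 ^ \<tau>. h j = 0) \<and>
      (\<forall>j<2 ^ \<tau>. poly (\<Sum>i<2 ^ \<tau>. smult (h i) (Xbar m v i)) (omega m v j + \<beta>) = F j)"
  have le: "(2::nat) ^ \<tau> \<le> 2 ^ m"
    using assms(1) by simp
  have "(\<Sum>i<2 ^ \<tau>. smult (h i) (Xbar m v i)) = (\<Sum>i<2 ^ \<tau>. smult (g i) (Xbar m v i))"
    using h assms le card_omega_translate[OF assms(1), of \<beta>]
    by (intro poly_eqI_degree[where A = "(\<lambda>j. omega m v j + \<beta>) ` {..<2 ^ \<tau>}"])
      (auto simp: degree_Xbar_sum_less)
  then have "(\<Sum>i<2 ^ \<tau>. smult (h i - g i) (Xbar m v i)) = 0"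
    by (simp add: smult_diff_left sum_subtractf)
  then have "h i = g i" if "i < 2 ^ \<tau>" for i
    using Xbar_sum_eq_0_imp_eq_0[OF le _ that, of "\<lambda>i. h i - g i"] by simp
  with h assms(2) show "h = g"
    by (intro ext) (metis not_le)
qed

lemma sum_IFFT_Xbar_eq:
  assumes "\<tau> \<le> m" "\<forall>k\<ge>2 ^ \<tau>. coeff q k = 0" "\<forall>j<2 ^ \<tau>. poly q (omega m v j + \<beta>) = F j"
  shows "(\<Sum>j<2 ^ \<tau>. smult (IFFT m v F \<tau> \<beta> j) (Xbar m v j)) = q"
proof -
  have "(2::nat) ^ \<tau> \<le> 2 ^ m"
    using assms(1) by simp
  then obtain g where g: "\<forall>j\<ge>2 ^ \<tau>. g j = 0" "q = (\<Sum>i<2 ^ \<tau>. smult (g i) (Xbar m v i))"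
    using ex_Xbar_sum_eq assms(2) by blast
  with assms have "IFFT m v F \<tau> \<beta> = g"
    by (intro IFFT_eqI) auto
  with g show ?thesis
    by simp
qed

lemma sum_s_quotient_eq_IFFT:
  assumes "\<mu> \<le> m"
  shows "(\<Sum>i<2 ^ \<mu>. smult (F i) (s_quotient m v \<mu> (\<beta> + omega m v i)))
    = smult (omega_prod m v \<mu>) (\<Sum>j<2 ^ \<mu>. smult (IFFT m v F \<mu> \<beta> j) (Xbar m v j))"
proof -
  let ?G = "\<Sum>i<2 ^ \<mu>. smult (F i) (s_quotient m v \<mu> (\<beta> + omega m v i))"
  let ?c = "omega_prod m v \<mu>"
  have c: "?c \<noteq> 0"
    using omega_prod_mult_p_const[OF assms] by auto
  have "(\<Sum>j<2 ^ \<mu>. smult (IFFT m v F \<mu> \<beta> j) (Xbar m v j)) = smult (inverse ?c) ?G"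
  proof (rule sum_IFFT_Xbar_eq[OF assms])
    have "coeff (s_quotient m v \<mu> a) k = 0" if "2 ^ \<mu> \<le> k" for a k
      using that by (intro coeff_eq_0) (simp add: degree_s_quotient less_le_trans[of _ "2 ^ \<mu>"])
    then show "\<forall>k\<ge>2 ^ \<mu>. coeff (smult (inverse ?c) ?G) k = 0"
      by (simp add: coeff_sum)
    have "poly ?G (omega m v j + \<beta>) = F j * ?c" if "j < 2 ^ \<mu>" for j
      using assms that by (simp add: poly_sum poly_s_quotient_translate if_distrib cong: if_cong)
    with c show "\<forall>j<2 ^ \<mu>. poly (smult (inverse ?c) ?G) (omega m v j + \<beta>) = F j"
      by simp
  qed
  with c show ?thesis
    by simp
qed

end

theorem lemma4:
  fixes m \<mu> :: nat and v :: "nat \<Rightarrow> 'a::{field,finite}" and r :: "nat \<Rightarrow> 'a"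
  assumes card: "card (UNIV :: 'a set) = 2 ^ m"
    and basis: "is_F2_basis m v"
    and mu: "\<mu> \<le> m"
  shows "(\<Sum>j<2 ^ m. smult (r j)
            ((s_poly m v \<mu> - [:poly (s_poly m v \<mu>) (omega m v j):]) div [:- omega m v j, 1:]))
       = (\<Sum>j<2 ^ \<mu>. smult
            (inverse (p_const m v (2 ^ m - 2 ^ \<mu>)) *
             (\<Sum>l<2 ^ (m - \<mu>). IFFT m v (\<lambda>i. r (l * 2 ^ \<mu> + i)) \<mu> (omega m v (2 ^ \<mu> * l)) j))
            (Xbar m v j))"
proof -
  let ?I = "\<lambda>l. IFFT m v (\<lambda>i. r (l * 2 ^ \<mu> + i)) \<mu> (omega m v (2 ^ \<mu> * l))"
  let ?c = "omega_prod m v \<mu>"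
  have inverse_p: "inverse (p_const m v (2 ^ m - 2 ^ \<mu>)) = ?c"
    using omega_prod_mult_p_const[OF card basis mu] by (simp add: inverse_unique mult.commute)
  have "(\<Sum>j<2 ^ m. smult (r j)
            ((s_poly m v \<mu> - [:poly (s_poly m v \<mu>) (omega m v j):]) div [:- omega m v j, 1:]))
      = (\<Sum>j<2 ^ (m - \<mu>) * 2 ^ \<mu>. smult (r j) (s_quotient m v \<mu> (omega m v j)))"
    using mu by (simp add: s_poly_minus_const_div[OF card basis] flip: power_add)
  also have "\<dots> = (\<Sum>l<2 ^ (m - \<mu>). \<Sum>i<2 ^ \<mu>.
      smult (r (l * 2 ^ \<mu> + i)) (s_quotient m v \<mu> (omega m v (2 ^ \<mu> * l) + omega m v i)))"
    unfolding sum_lessThan_mult_nested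
    by (intro sum.cong refl) (subst omega_mult_power_add; simp add: mult.commute)
  also have "\<dots> = (\<Sum>l<2 ^ (m - \<mu>). smult ?c (\<Sum>j<2 ^ \<mu>. smult (?I l j) (Xbar m v j)))"
    by (simp add: sum_s_quotient_eq_IFFT[OF card basis mu])
  also have "\<dots> = (\<Sum>l<2 ^ (m - \<mu>). \<Sum>j<2 ^ \<mu>. smult (?c * ?I l j) (Xbar m v j))"
    by (simp add: smult_sum_right)
  also have "\<dots> = (\<Sum>j<2 ^ \<mu>. \<Sum>l<2 ^ (m - \<mu>). smult (?c * ?I l j) (Xbar m v j))"
    by (rule sum.swap)
  also have "\<dots> = (\<Sum>j<2 ^ \<mu>. smult (inverse (p_const m v (2 ^ m - 2 ^ \<mu>)) *
      (\<Sum>l<2 ^ (m - \<mu>). ?I l j)) (Xbar m v j))"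
    by (simp add: inverse_p sum_distrib_left smult_sum)
  finally show ?thesis .
qed

end
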